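(* Let $M$ be an observable FSM with $n$ states, all reachable, such that the initial state $s_0$ is the only d-reachable state of $M$ and no two distinct states of $M$ are r-distinguishable. Let $m\ge n$. Then (i) every $\bar x/\bar y\in L_M(s_0)$ of length $mn$ has a prefix $\pi$ with $term(s_0,\pi,m)\neq\varnothing$, so $Tr(s_0,m)\subseteq\bigcup_{i=0}^{mn}\Sigma_I^i$; and (ii) every test suite $T$ produced by $\textsc{GenerateTestSuite}(M,m)$ satisfies $|T|\le|\Sigma_I|^{mn}$.
   Context: FSMs and notation. An FSM is $M=(S,s_0,\Sigma_I,\Sigma_O,h_M)$ with finite state set $S$, initial state $s_0$, finite input/output alphabets and $h_M\subseteq S\times\Sigma_I\times\Sigma_O\times S$. IO sequences are written $\bar x/\bar y$. $L_M(s)$ is the set of IO sequences $x_1\dots x_k/y_1\dots y_k$ such that there are states $s=q_0,\dots,q_k$ with $(q_{i-1},x_i,y_i,q_i)\in h_M$; $L(M)=L_M(s_0)$. $out(s,x)=\{y\mid\exists s'.(s,x,y,s')\in h_M\}$. $M$ is observable if for all $s,x,y$ at most one $s'$ has $(s,x,y,s')\in h_M$; then $s\text{-after-}\alpha$ is the unique state reached from $s$ by $\alpha\in L_M(s)$. $\Delta_M(s)=\{x\mid out(s,x)\neq\varnothing\}$. $\mathrm{Pref}$ denotes the set of prefixes (including $\epsilon$), lifted to sets; $A.B=\{a.b\mid a\in A,b\in B\}$ with $A.\varnothing=A$. d-reachability and state cover. $\bar x$ is strongly defined in $M$ if for every prefix $\bar x_1.x$ of $\bar x$ ($x\in\Sigma_I$)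 and every $\bar x_1/\bar y_1\in L(M)$, $x\in\Delta_M(s_0\text{-after-}\bar x_1/\bar y_1)$. $\bar x$ d-reaches $s$ if $\bar x$ is strongly defined and $\{s_0\text{-after-}\bar x/\bar y\mid \bar x/\bar y\in L(M)\}=\{s\}$. For $S'\subseteq S$, $\widehat{S'}$ is the set of states in $S'$ d-reached by some input sequence. A state cover $V$ is a set consisting of $\epsilon$ (which d-reaches $s_0$) and, for every other d-reachable state, exactly one input sequence d-reaching it; for $s\in\widehat S$ let $\bar v_s\in V$ be the element d-reaching $s$. $V'=\{\bar x/\bar y\in L(M)\mid \bar x\in V\}$. r-distinguishability. Every $W\subseteq\Sigma_I^*$ r(0)-distinguishes states $s_1,s_2$ with $\Delta_M(s_1)\neq\Delta_M(s_2)$. For $k\ge0$, $W$ r($k+1$)-distinguishes $s_1,s_2$ if it r($k$)-distinguishes them, or there is $x\in\Delta_M(s_1)\cap\Delta_M(s_2)\cap\mathrm{Pref}(W)$ such that for every $y\in out(s_1,x)\cap out(s_2,x)$ some $W'$ with $\{x\}.W'\subseteq\mathrm{Pref}(W)$ r($k$)-distinguishes $s_1\text{-after-}x/y$ and $s_2\text{-after-}x/y$. $W$ r-distinguishes $s_1,s_2$ if it r($k$)-distinguishes them for some $k$; states are r-distinguishable if some $W$ r-distinguishes them. $S_D$ is the set of all maximal (w.r.t. inclusion) subsets of $S$ whose elements are pairwise r-distinguishable (a state r-distinguishable from no other state yields a singleton). Termination and traversal sets. For $s\in\widehat S$, $\bar x/\bar y\in L_M(s)$ and $S'\in S_D$,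 say $S'$ terminates $\bar x/\bar y$ for $s$ and $m$ if the number of nonempty prefixes $\pi$ of $\bar x/\bar y$ with $s\text{-after-}\pi\in S'$ equals $m-|\widehat{S'}|+1$ and no proper prefix of $\bar x/\bar y$ is terminated for $s$ and $m$ by any element of $S_D$. $term(s,\bar x/\bar y,m)$ is the set of such $S'$. $Tr(s,m)=\mathrm{Pref}\{\bar x\mid\exists\bar y.\ \bar x/\bar y\in L_M(s)\wedge term(s,\bar x/\bar y,m)\neq\varnothing\}$. Procedure $\textsc{GenerateTestSuite}(M,m)$: (1) Choose a state cover $V$, form $V'$, and set $T:=\bigcup_{s\in\widehat S}\{\bar v_s\}.Tr(s,m)$. (2) Let $D=\{(s,\bar x/\bar y)\mid s\in\widehat S,\ \bar x/\bar y\in L_M(s),\ term(s,\bar x/\bar y,m)\neq\varnothing\}$. For each $(s,\bar x/\bar y)\in D$: choose some $S_i\in term(s,\bar x/\bar y,m)$; then for every pair of traces $\bar x_1/\bar y_1,\bar x_2/\bar y_2$ in $V'\cup\{\beta.\pi\mid \beta\in V'\text{ with input portion }\bar v_s,\ \pi\in\mathrm{Pref}(\bar x/\bar y)\}$, let $s_j=s_0\text{-after-}\bar x_j/\bar y_j$; if $s_1\neq s_2$ and $s_1,s_2\in S_i$, let $W'=\{\bar x'\mid \bar x_1.\bar x'\in\mathrm{Pref}(T)\text{ and }\bar x_2.\bar x'\in\mathrm{Pref}(T)\}$ (for the current $T$); if $W'$ does not r-distinguish $s_1,s_2$, choose any $W$ that r-distinguishes $s_1,s_2$ and set $T:=T\cup\{\bar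 x_1,\bar x_2\}.W$. (3) Finally remove from $T$ every sequence that is a proper prefix of another element of $T$, and return $T$. *)

theory Defs
  imports Main "HOL-Library.Sublist"
begin

record ('s, 'x, 'y) fsm =
  states  :: "'s set"
  initial :: 's
  inputs  :: "'x set"
  outputs :: "'y set"
  trans   :: "('s \<times> 'x \<times> 'y \<times> 's) set"

definition well_formed :: "('s, 'x, 'y) fsm \<Rightarrow> bool" where
  "well_formed M \<longleftrightarrow> finite (states M) \<and> initial M \<in> states M
     \<and> finite (inputs M) \<and> inputs M \<noteq> {} \<and> finite (outputs M)
     \<and> trans M \<subseteq> states M \<times> inputs M \<times> outputs M \<times> states M"

type_synonym ('x, 'y) io = "('x \<times> 'y) list"

fun is_trace :: "('s, 'x, 'y) fsm \<Rightarrow> 's \<Rightarrow> ('x, 'y) io \<Rightarrow> bool" where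
  "is_trace M s [] = True"
| "is_trace M s ((x, y) # io) = (\<exists>s'. (s, x, y, s') \<in> trans M \<and> is_trace M s' io)"

definition LS :: "('s, 'x, 'y) fsm \<Rightarrow> 's \<Rightarrow> ('x, 'y) io set" where
  "LS M s = {io. is_trace M s io}"

abbreviation L :: "('s, 'x, 'y) fsm \<Rightarrow> ('x, 'y) io set" where
  "L M \<equiv> LS M (initial M)"

definition out :: "('s, 'x, 'y) fsm \<Rightarrow> 's \<Rightarrow> 'x \<Rightarrow> 'y set" where
  "out M s x = {y. \<exists>s'. (s, x, y, s') \<in> trans M}"

definition defined_inputs :: "('s, 'x, 'y) fsm \<Rightarrow> 's \<Rightarrow> 'x set" where
  "defined_inputs M s = {x. out M s x \<noteq> {}}"

definition observable :: "('s, 'x, 'y) fsm \<Rightarrow> bool" where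
  "observable M \<longleftrightarrow> (\<forall>s x y s1 s2. (s, x, y, s1) \<in> trans M \<and> (s, x, y, s2) \<in> trans M \<longrightarrow> s1 = s2)"

text \<open>s-after-io (meaningful for observable M and io in L_M(s)).\<close>
fun after :: "('s, 'x, 'y) fsm \<Rightarrow> 's \<Rightarrow> ('x, 'y) io \<Rightarrow> 's" where
  "after M s [] = s"
| "after M s ((x, y) # io) = after M (THE s'. (s, x, y, s') \<in> trans M) io"

definition reachable :: "('s, 'x, 'y) fsm \<Rightarrow> 's \<Rightarrow> bool" where
  "reachable M s \<longleftrightarrow> (\<exists>io \<in> L M. after M (initial M) io = s)"

definition Pref :: "'a list set \<Rightarrow> 'a list set" where
  "Pref A = {p. \<exists>a \<in> A. prefix p a}"

definition dot :: "'a list set \<Rightarrow> 'a list set \<Rightarrow> 'a list set" where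
  "dot A B = (if B = {} then A else {a @ b | a b. a \<in> A \<and> b \<in> B})"

definition strongly_defined :: "('s, 'x, 'y) fsm \<Rightarrow> 'x list \<Rightarrow> bool" where
  "strongly_defined M xs \<longleftrightarrow>
     (\<forall>i < length xs. \<forall>ys. length ys = i \<and> zip (take i xs) ys \<in> L M
        \<longrightarrow> xs ! i \<in> defined_inputs M (after M (initial M) (zip (take i xs) ys)))"

definition d_reaches :: "('s, 'x, 'y) fsm \<Rightarrow> 'x list \<Rightarrow> 's \<Rightarrow> bool" where
  "d_reaches M xs s \<longleftrightarrow> strongly_defined M xs \<and>
     {after M (initial M) (zip xs ys) | ys. length ys = length xs \<and> zip xs ys \<in> L M} = {s}"

text \<open>The set of d-reachable states (\<open>\<widehat>S\<close>); \<open>\<widehat>S'\<close> is \<open>S' \<inter> d_reachable_states M\<close>.\<close>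
definition d_reachable_states :: "('s, 'x, 'y) fsm \<Rightarrow> 's set" where
  "d_reachable_states M = {s \<in> states M. \<exists>xs. d_reaches M xs s}"

definition state_cover :: "('s, 'x, 'y) fsm \<Rightarrow> 'x list set \<Rightarrow> bool" where
  "state_cover M V \<longleftrightarrow> [] \<in> V \<and> (\<forall>v \<in> V. \<exists>s \<in> d_reachable_states M. d_reaches M v s)
     \<and> (\<forall>s \<in> d_reachable_states M. \<exists>!v. v \<in> V \<and> d_reaches M v s)"

definition cover_seq :: "('s, 'x, 'y) fsm \<Rightarrow> 'x list set \<Rightarrow> 's \<Rightarrow> 'x list" where
  "cover_seq M V s = (THE v. v \<in> V \<and> d_reaches M v s)"

definition cover_traces :: "('s, 'x, 'y) fsm \<Rightarrow> 'x list set \<Rightarrow> ('x, 'y) io set" where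
  "cover_traces M V = {io \<in> L M. map fst io \<in> V}"

fun r_dist :: "('s, 'x, 'y) fsm \<Rightarrow> nat \<Rightarrow> 'x list set \<Rightarrow> 's \<Rightarrow> 's \<Rightarrow> bool" where
  "r_dist M 0 W s1 s2 = (defined_inputs M s1 \<noteq> defined_inputs M s2)"
| "r_dist M (Suc k) W s1 s2 =
     (r_dist M k W s1 s2 \<or>
      (\<exists>x \<in> defined_inputs M s1 \<inter> defined_inputs M s2. [x] \<in> Pref W \<and>
         (\<forall>y \<in> out M s1 x \<inter> out M s2 x. \<exists>W'. dot {[x]} W' \<subseteq> Pref W \<and>
             r_dist M k W' (after M s1 [(x, y)]) (after M s2 [(x, y)]))))"

definition r_distinguishes :: "('s, 'x, 'y) fsm \<Rightarrow> 'x list set \<Rightarrow> 's \<Rightarrow> 's \<Rightarrow> bool" where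
  "r_distinguishes M W s1 s2 \<longleftrightarrow> W \<subseteq> lists (inputs M) \<and> (\<exists>k. r_dist M k W s1 s2)"

definition r_distinguishable :: "('s, 'x, 'y) fsm \<Rightarrow> 's \<Rightarrow> 's \<Rightarrow> bool" where
  "r_distinguishable M s1 s2 \<longleftrightarrow> (\<exists>W. r_distinguishes M W s1 s2)"

definition SD :: "('s, 'x, 'y) fsm \<Rightarrow> 's set set" where
  "SD M = {S'. S' \<subseteq> states M \<and> pairwise (r_distinguishable M) S' \<and>
     (\<forall>S''. S' \<subseteq> S'' \<and> S'' \<subseteq> states M \<and> pairwise (r_distinguishable M) S'' \<longrightarrow> S'' = S')}"

definition visits :: "('s, 'x, 'y) fsm \<Rightarrow> 's \<Rightarrow> ('x, 'y) io \<Rightarrow> 's set \<Rightarrow> nat" where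
  "visits M s io S' = card {i. 1 \<le> i \<and> i \<le> length io \<and> after M s (take i io) \<in> S'}"

function term_set :: "('s, 'x, 'y) fsm \<Rightarrow> 's \<Rightarrow> ('x, 'y) io \<Rightarrow> nat \<Rightarrow> 's set set" where
  "term_set M s io m =
     {S' \<in> SD M. int (visits M s io S') = int m - int (card (S' \<inter> d_reachable_states M)) + 1
        \<and> (\<forall>i \<in> {..<length io}. term_set M s (take i io) m = {})}"
  by pat_completeness auto
termination
  by (relation "measure (\<lambda>(M, s, io, m). length io)") auto

definition Tr :: "('s, 'x, 'y) fsm \<Rightarrow> 's \<Rightarrow> nat \<Rightarrow> 'x list set" where
  "Tr M s m = Pref {map fst io | io. io \<in> LS M s \<and> term_set M s io m \<noteq> {}}"

section \<open>The procedure GenerateTestSuite (as a relation on its possible outputs)\<close>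

definition D_set :: "('s, 'x, 'y) fsm \<Rightarrow> nat \<Rightarrow> ('s \<times> ('x, 'y) io) set" where
  "D_set M m = {(s, io). s \<in> d_reachable_states M \<and> io \<in> LS M s \<and> term_set M s io m \<noteq> {}}"

definition initial_T :: "('s, 'x, 'y) fsm \<Rightarrow> nat \<Rightarrow> 'x list set \<Rightarrow> 'x list set" where
  "initial_T M m V = (\<Union>s \<in> d_reachable_states M. dot {cover_seq M V s} (Tr M s m))"

definition pair_traces :: "('s, 'x, 'y) fsm \<Rightarrow> 'x list set \<Rightarrow> 's \<Rightarrow> ('x, 'y) io \<Rightarrow> ('x, 'y) io set" where
  "pair_traces M V s io = cover_traces M V \<union>
     {\<beta> @ \<pi> | \<beta> \<pi>. \<beta> \<in> cover_traces M V \<and> map fst \<beta> = cover_seq M V s \<and> prefix \<pi> io}"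

text \<open>One iteration of the inner loop of step (2) for a pair of traces.\<close>
definition pair_step :: "('s, 'x, 'y) fsm \<Rightarrow> 's set \<Rightarrow> 'x list set \<Rightarrow>
    ('x, 'y) io \<times> ('x, 'y) io \<Rightarrow> 'x list set \<Rightarrow> bool" where
  "pair_step M Si T p T' \<longleftrightarrow>
     (let t1 = fst p; t2 = snd p;
          s1 = after M (initial M) t1; s2 = after M (initial M) t2;
          W' = {x'. map fst t1 @ x' \<in> Pref T \<and> map fst t2 @ x' \<in> Pref T}
      in if s1 \<noteq> s2 \<and> s1 \<in> Si \<and> s2 \<in> Si \<and> \<not> r_distinguishes M W' s1 s2
         then (\<exists>W. r_distinguishes M W s1 s2 \<and> T' = T \<union> dot {map fst t1, map fst t2} W)
         else T' = T)"

inductive process_pairs :: "('s, 'x, 'y) fsm \<Rightarrow> 's set \<Rightarrow> (('x, 'y) io \<times> ('x, 'y) io) list \<Rightarrow>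
    'x list set \<Rightarrow> 'x list set \<Rightarrow> bool" where
  "process_pairs M Si [] T T"
| "pair_step M Si T p T' \<Longrightarrow> process_pairs M Si ps T' T'' \<Longrightarrow> process_pairs M Si (p # ps) T T''"

inductive process_D :: "('s, 'x, 'y) fsm \<Rightarrow> nat \<Rightarrow> 'x list set \<Rightarrow> ('s \<times> ('x, 'y) io) list \<Rightarrow>
    'x list set \<Rightarrow> 'x list set \<Rightarrow> bool" where
  "process_D M m V [] T T"
| "Si \<in> term_set M s io m \<Longrightarrow>
   distinct ps \<Longrightarrow> set ps = pair_traces M V s io \<times> pair_traces M V s io \<Longrightarrow>
   process_pairs M Si ps T T' \<Longrightarrow> process_D M m V ds T' T'' \<Longrightarrow>
   process_D M m V ((s, io) # ds) T T''"

text \<open>\<open>generated_suite M m T\<close>: T is a possible result of GenerateTestSuite(M, m)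
  (for some choice of state cover, processing order, S_i and W).\<close>
definition generated_suite :: "('s, 'x, 'y) fsm \<Rightarrow> nat \<Rightarrow> 'x list set \<Rightarrow> bool" where
  "generated_suite M m T \<longleftrightarrow>
     (\<exists>V ds Tfin. state_cover M V \<and> distinct ds \<and> set ds = D_set M m
        \<and> process_D M m V ds (initial_T M m V) Tfin
        \<and> T = {t \<in> Tfin. \<not> (\<exists>t' \<in> Tfin. strict_prefix t t')})"

end

theory Submission
  imports Defs
begin

text \<open>Since no two distinct states are r-distinguishable, the maximal sets of pairwise
  r-distinguishable states are the singletons, and a trace from \<open>s\<^sub>0\<close> is terminated by \<open>{t}\<close>
  as soon as it has visited \<open>t\<close> exactly \<open>m\<close> times if \<open>t = s\<^sub>0\<close> and \<open>m + 1\<close> times otherwise.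
  Staying strictly below all these thresholds allows at most \<open>(m - 1) + (n - 1) m = m n - 1\<close>
  visits, so along a trace of length \<open>m n\<close> some state reaches its threshold; as visit counts
  grow by at most one per step, the first index where this happens gives a terminated prefix.
  Hence traversal sequences have length at most \<open>m n\<close>. Step (2) of the procedure never adds
  sequences, since a singleton contains no two distinct states, so the suite is a prefix-free
  set of input sequences of length at most \<open>m n\<close>; padding them to length \<open>m n\<close> is injective.\<close>

lemma first_threshold_crossing:
  fixes c :: "nat \<Rightarrow> 'a \<Rightarrow> nat"
  assumes "\<And>t. c 0 t = 0" "\<And>k t. c (Suc k) t \<le> Suc (c k t)"
    and "t \<in> A" "thr t \<le> c K t"
  shows "\<exists>k \<le> K. (\<exists>t\<in>A. c k t = thr t) \<and> (\<forall>i<k. \<forall>t\<in>A. c i t \<noteq> thr t)"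
proof -
  let ?crossed = "\<lambda>k. \<exists>t\<in>A. thr t \<le> c k t"
  obtain k where k: "?crossed k" and least: "\<And>i. i < k \<Longrightarrow> \<not> ?crossed i"
    using assms(3,4) exists_least_iff[of ?crossed] by blast
  from k obtain t where t: "t \<in> A" "thr t \<le> c k t" by blast
  have "c k t = thr t"
  proof (cases k)
    case 0
    then show ?thesis using t assms(1) by simp
  next
    case (Suc j)
    then show ?thesis using t least[of j] assms(2)[of j t] by fastforce
  qed
  moreover have "k \<le> K" using least assms(3,4) by (meson not_le)
  ultimately show ?thesis using t least by fastforce
qed

lemma first_occurrence_iff:
  fixes P Q :: "nat \<Rightarrow> bool"
  assumes "\<And>k. k \<le> K \<Longrightarrow> Q k \<longleftrightarrow> P k \<and> (\<forall>i<k. \<not> Q i)" "k \<le> K"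
  shows "Q k \<longleftrightarrow> P k \<and> (\<forall>i<k. \<not> P i)"
  using assms(2)
proof (induction k rule: less_induct)
  case (less k)
  have "(\<forall>i<k. \<not> Q i) \<longleftrightarrow> (\<forall>i<k. \<not> P i)"
  proof
    assume no_Q: "\<forall>i<k. \<not> Q i"
    show "\<forall>i<k. \<not> P i"
    proof (rule ccontr)
      assume "\<not> (\<forall>i<k. \<not> P i)"
      then obtain i where "i < k" "P i" and least: "\<And>j. j < i \<Longrightarrow> \<not> P j"
        using exists_least_iff[of "\<lambda>i. i < k \<and> P i"] by (metis order.strict_trans)
      then have "Q i" using less by simp
      with \<open>i < k\<close> no_Q show False by blast
    qed
  qed (use less in auto)
  then show ?case using assms(1) less.prems by blast
qed

lemma card_prefix_antichain_le:
  assumes X: "finite X" "X \<noteq> {}"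
    and T: "T \<subseteq> {xs \<in> lists X. length xs \<le> N}"
    and antichain: "\<forall>t1\<in>T. \<forall>t2\<in>T. prefix t1 t2 \<longrightarrow> t1 = t2"
  shows "finite T \<and> card T \<le> card X ^ N"
proof -
  obtain x where x: "x \<in> X" using X(2) by blast
  define pad where "pad t = t @ replicate (N - length t) x" for t
  have "inj_on pad T"
  proof (rule inj_onI)
    fix t1 t2 assume "t1 \<in> T" "t2 \<in> T" "pad t1 = pad t2"
    then have "prefix t1 t2 \<or> prefix t2 t1"
      unfolding pad_def by (metis prefix_same_cases prefixI)
    then show "t1 = t2" using antichain \<open>t1 \<in> T\<close> \<open>t2 \<in> T\<close> by metis
  qed
  moreover have "pad ` T \<subseteq> {xs. set xs \<subseteq> X \<and> length xs = N}"
    using T x unfolding pad_def by (fastforce dest: in_listsD)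
  ultimately have "card T \<le> card {xs. set xs \<subseteq> X \<and> length xs = N}"
    by (metis card_image card_mono finite_lists_length_eq[OF X(1)])
  moreover have "finite T"
    by (rule finite_subset[OF _ finite_lists_length_le[OF X(1), of N]]) (use T in auto)
  ultimately show ?thesis by (simp add: card_lists_length_eq[OF X(1)])
qed

lemma is_trace_take: "is_trace M s io \<Longrightarrow> is_trace M s (take k io)"
  by (induction M s io arbitrary: k rule: is_trace.induct) (auto simp: take_Cons split: nat.split)

lemma after_Cons_trans:
  assumes "observable M" "(s, x, y, s') \<in> trans M"
  shows "after M s ((x, y) # io) = after M s' io"
proof -
  have "(THE s''. (s, x, y, s'') \<in> trans M) = s'"
    using assms unfolding observable_def by blast
  then show ?thesis by simp
qed

lemma after_in_states:
  assumes "well_formed M" "observable M"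
  shows "is_trace M s io \<Longrightarrow> s \<in> states M \<Longrightarrow> after M s io \<in> states M"
proof (induction io arbitrary: s)
  case (Cons a io)
  obtain x y s' where "a = (x, y)" "(s, x, y, s') \<in> trans M" "is_trace M s' io"
    using Cons.prems by (cases a) auto
  then show ?case using Cons.IH assms after_Cons_trans unfolding well_formed_def by fastforce
qed simp

lemma trace_inputs_in_lists:
  assumes "well_formed M"
  shows "is_trace M s io \<Longrightarrow> map fst io \<in> lists (inputs M)"
proof (induction io arbitrary: s)
  case (Cons a io)
  then show ?case using assms by (cases a) (auto simp: well_formed_def)
qed simp

lemma SD_eq_singletons:
  assumes "states M \<noteq> {}"
    and "\<forall>s1 \<in> states M. \<forall>s2 \<in> states M. s1 \<noteq> s2 \<longrightarrow> \<not> r_distinguishable M s1 s2"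
  shows "SD M = (\<lambda>s. {s}) ` states M"
proof -
  have pairwise_iff: "pairwise (r_distinguishable M) S \<longleftrightarrow> (\<forall>s\<in>S. \<forall>t\<in>S. s = t)"
    if "S \<subseteq> states M" for S
    using that assms(2) unfolding pairwise_def by blast
  have "S \<in> SD M \<longleftrightarrow> (\<exists>s\<in>states M. S = {s})" for S
  proof
    assume S: "S \<in> SD M"
    then have sub: "S \<subseteq> states M" and pw: "pairwise (r_distinguishable M) S"
      and max: "\<And>S'. S \<subseteq> S' \<Longrightarrow> S' \<subseteq> states M \<Longrightarrow> pairwise (r_distinguishable M) S' \<Longrightarrow> S' = S"
      unfolding SD_def by blast+
    obtain s where s: "s \<in> states M" using assms(1) by blast
    have "S \<noteq> {}"
    proof
      assume "S = {}"
      then have "{s} = S" using s by (intro max) auto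
      with \<open>S = {}\<close> show False by simp
    qed
    then show "\<exists>s\<in>states M. S = {s}"
      using sub pw pairwise_iff by blast
  next
    assume "\<exists>s\<in>states M. S = {s}"
    then show "S \<in> SD M"
      using pairwise_iff unfolding SD_def by blast
  qed
  then show ?thesis by blast
qed

text \<open>The defining equation of \<open>term_set\<close> recurs into its own right-hand side, so it would
  make the simplifier loop.\<close>

declare term_set.simps [simp del]

lemma mem_term_set_iff:
  "S \<in> term_set M s io m \<longleftrightarrow> S \<in> SD M
     \<and> int (visits M s io S) = int m - int (card (S \<inter> d_reachable_states M)) + 1
     \<and> (\<forall>i < length io. term_set M s (take i io) m = {})"
  by (subst term_set.simps) (simp only: mem_Collect_eq lessThan_iff Ball_def)

lemma term_set_take_empty:
  assumes "term_set M s io m \<noteq> {}" "k < length io"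
  shows "term_set M s (take k io) m = {}"
  using assms by (auto simp: mem_term_set_iff)

text \<open>The count \<open>m - |\<widehat>S'| + 1\<close> of the termination condition for \<open>S' = {t}\<close>; the
  subtraction does not truncate since \<open>|\<widehat>S'| \<le> 1\<close>.\<close>

definition reaches_threshold :: "('s, 'x, 'y) fsm \<Rightarrow> 's \<Rightarrow> ('x, 'y) io \<Rightarrow> nat \<Rightarrow> bool" where
  "reaches_threshold M s io m \<longleftrightarrow>
     (\<exists>t \<in> states M. visits M s io {t} = m + 1 - card ({t} \<inter> d_reachable_states M))"

lemma term_set_nonempty_iff_singleton_SD:
  assumes "SD M = (\<lambda>s. {s}) ` states M"
  shows "term_set M s io m \<noteq> {} \<longleftrightarrow>
    reaches_threshold M s io m \<and> (\<forall>i < length io. term_set M s (take i io) m = {})"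
proof -
  have card_le: "card ({t} \<inter> d_reachable_states M) \<le> 1" for t
    using card_mono[of "{t}" "{t} \<inter> d_reachable_states M"] by (simp add: Int_insert_left)
  have "int (visits M s io {t}) = int m - int (card ({t} \<inter> d_reachable_states M)) + 1
      \<longleftrightarrow> visits M s io {t} = m + 1 - card ({t} \<inter> d_reachable_states M)" for t
    using card_le[of t] by linarith
  then show ?thesis
    unfolding ex_in_conv[symmetric] mem_term_set_iff reaches_threshold_def assms by blast
qed

lemma term_set_take_nonempty_iff:
  assumes "SD M = (\<lambda>s. {s}) ` states M" "k \<le> length io"
  shows "term_set M s (take k io) m \<noteq> {} \<longleftrightarrow>
    reaches_threshold M s (take k io) m \<and> (\<forall>i<k. \<not> reaches_threshold M s (take i io) m)"
proof (rule first_occurrence_iff[OF _ assms(2)])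
  fix j assume "j \<le> length io"
  then have "term_set M s (take j io) m \<noteq> {} \<longleftrightarrow>
      reaches_threshold M s (take j io) m \<and> (\<forall>i<j. term_set M s (take i io) m = {})"
    unfolding term_set_nonempty_iff_singleton_SD[OF assms(1)] by (simp add: min_def)
  then show "term_set M s (take j io) m \<noteq> {} \<longleftrightarrow>
      reaches_threshold M s (take j io) m \<and> (\<forall>i<j. \<not> term_set M s (take i io) m \<noteq> {})"
    by (simp only: not_not)
qed

lemma visits_take:
  "visits M s (take k io) S = card {i. 1 \<le> i \<and> i \<le> min k (length io) \<and> after M s (take i io) \<in> S}"
  unfolding visits_def by (rule arg_cong[where f = card]) auto

lemma visits_Nil [simp]: "visits M s [] S = 0"
  by (simp add: visits_def)

lemma visits_take_Suc_le: "visits M s (take (Suc k) io) S \<le> Suc (visits M s (take k io) S)"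
proof -
  let ?V = "\<lambda>k. {i. 1 \<le> i \<and> i \<le> min k (length io) \<and> after M s (take i io) \<in> S}"
  have "?V (Suc k) \<subseteq> insert (Suc k) (?V k)" by auto
  moreover have "finite (?V k)" by (rule finite_subset[of _ "{..k}"]) auto
  ultimately have "card (?V (Suc k)) \<le> card (insert (Suc k) (?V k))"
    by (intro card_mono) auto
  also have "\<dots> \<le> Suc (card (?V k))" by (simp add: card_insert_if)
  finally show ?thesis unfolding visits_take .
qed

lemma sum_visits_singletons:
  assumes "finite A" "\<forall>i \<in> {1..length io}. after M s (take i io) \<in> A"
  shows "(\<Sum>t\<in>A. visits M s io {t}) = length io"
proof -
  let ?V = "\<lambda>t. {i. 1 \<le> i \<and> i \<le> length io \<and> after M s (take i io) \<in> {t}}"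
  have "{1..length io} = (\<Union>t\<in>A. ?V t)" using assms(2) by auto
  then have "length io = card (\<Union>t\<in>A. ?V t)" by (metis card_atLeastAtMost diff_Suc_1)
  also have "\<dots> = (\<Sum>t\<in>A. card (?V t))"
    by (rule card_UN_disjoint) (use assms(1) in \<open>auto intro: finite_subset[of _ "{..length io}"]\<close>)
  finally show ?thesis unfolding visits_def by simp
qed

lemma exists_visits_ge_threshold:
  assumes "well_formed M" "observable M" "is_trace M s io" "s \<in> states M"
    and "(\<Sum>t\<in>states M. thr t) < length io + card (states M)"
  shows "\<exists>t \<in> states M. thr t \<le> visits M s io {t}"
proof (rule ccontr)
  assume "\<not> ?thesis"
  then have below: "\<And>t. t \<in> states M \<Longrightarrow> Suc (visits M s io {t}) \<le> thr t"
    by (auto simp: not_le Suc_le_eq)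
  have "\<forall>i \<in> {1..length io}. after M s (take i io) \<in> states M"
    using after_in_states[OF assms(1,2) is_trace_take[OF assms(3)] assms(4)] by blast
  then have "(\<Sum>t\<in>states M. visits M s io {t}) = length io"
    using assms(1) by (intro sum_visits_singletons) (auto simp: well_formed_def)
  then have "length io + card (states M) \<le> (\<Sum>t\<in>states M. thr t)"
    using sum_mono[of "states M" "\<lambda>t. Suc (visits M s io {t})" thr] below by (simp add: sum_Suc)
  then show False using assms(5) by simp
qed

lemma terminated_prefix_exists:
  assumes wf: "well_formed M" and obs: "observable M"
    and SD: "SD M = (\<lambda>s. {s}) ` states M"
    and dr: "d_reachable_states M = {initial M}"
    and io: "io \<in> L M" "m * card (states M) \<le> length io"
  shows "\<exists>k \<le> m * card (states M). term_set M (initial M) (take k io) m \<noteq> {}"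
proof -
  define N where "N = m * card (states M)"
  define thr where "thr t = m + 1 - card ({t} \<inter> d_reachable_states M)" for t
  define c where "c k t = visits M (initial M) (take k io) {t}" for k t
  have s0: "initial M \<in> states M" and fin: "finite (states M)"
    using wf unfolding well_formed_def by auto
  have "(\<Sum>t\<in>states M. thr t) + 1 = (\<Sum>t\<in>states M. thr t + (if t = initial M then 1 else 0))"
    using fin s0 by (simp add: sum.distrib)
  also have "\<dots> = (\<Sum>t\<in>states M. Suc m)" by (rule sum.cong) (auto simp: thr_def dr)
  finally have "(\<Sum>t\<in>states M. thr t) < length (take N io) + card (states M)"
    using io(2) N_def by (simp add: algebra_simps)
  moreover have "is_trace M (initial M) (take N io)"
    using io(1) unfolding LS_def by (simp add: is_trace_take)
  ultimately obtain t where "t \<in> states M" "thr t \<le> c N t"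
    using exists_visits_ge_threshold[OF wf obs _ s0] unfolding c_def by blast
  moreover have "c 0 t = 0" "c (Suc k) t \<le> Suc (c k t)" for k t
    unfolding c_def by (simp_all add: visits_take_Suc_le)
  ultimately obtain k where "k \<le> N" "\<exists>t\<in>states M. c k t = thr t"
      "\<forall>i<k. \<forall>t\<in>states M. c i t \<noteq> thr t"
    using first_threshold_crossing[where c = c and thr = thr] by blast
  then have "k \<le> N" "term_set M (initial M) (take k io) m \<noteq> {}"
    using term_set_take_nonempty_iff[OF SD, of k io] io(2) N_def
    unfolding reaches_threshold_def c_def thr_def by auto
  then show ?thesis unfolding N_def by blast
qed

lemma terminated_length_le:
  assumes "well_formed M" "observable M"
    and "SD M = (\<lambda>s. {s}) ` states M" "d_reachable_states M = {initial M}"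
    and io: "io \<in> L M" "term_set M (initial M) io m \<noteq> {}"
  shows "length io \<le> m * card (states M)"
proof (rule ccontr)
  assume "\<not> ?thesis"
  then obtain k where "k < length io" "term_set M (initial M) (take k io) m \<noteq> {}"
    using terminated_prefix_exists[OF assms(1-4) io(1), where m = m] by fastforce
  then show False using term_set_take_empty[OF io(2)] by blast
qed

lemma Tr_subset_bounded_lists:
  assumes "well_formed M" "observable M"
    and "SD M = (\<lambda>s. {s}) ` states M" "d_reachable_states M = {initial M}"
  shows "Tr M (initial M) m \<subseteq> {xs \<in> lists (inputs M). length xs \<le> m * card (states M)}"
proof
  fix xs assume "xs \<in> Tr M (initial M) m"
  then obtain io where io: "io \<in> L M" "term_set M (initial M) io m \<noteq> {}" "prefix xs (map fst io)"
    unfolding Tr_def Pref_def by blast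
  have "length xs \<le> m * card (states M)"
    using prefix_length_le[OF io(3)] terminated_length_le[OF assms io(1,2)] by simp
  moreover have "xs \<in> lists (inputs M)"
    using trace_inputs_in_lists[OF assms(1)] io(1,3) unfolding LS_def
    by (metis lists_mono mem_Collect_eq prefix_def append_in_lists_conv)
  ultimately show "xs \<in> {xs \<in> lists (inputs M). length xs \<le> m * card (states M)}" by blast
qed

lemma process_pairs_singleton: "process_pairs M Si ps T T' \<Longrightarrow> Si = {s} \<Longrightarrow> T' = T"
  by (induction rule: process_pairs.induct) (auto simp: pair_step_def Let_def)

lemma process_D_singleton_SD:
  "process_D M m V ds T T' \<Longrightarrow> \<forall>S \<in> SD M. \<exists>s. S = {s} \<Longrightarrow> T' = T"
proof (induction rule: process_D.induct)
  case (2 Si M s io m ps V T T' ds T'')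
  then show ?case using process_pairs_singleton mem_term_set_iff by metis
qed simp

lemma d_reaches_Nil: "d_reaches M [] (initial M)"
  unfolding d_reaches_def strongly_defined_def LS_def by auto

lemma cover_seq_initial:
  assumes "state_cover M V" "initial M \<in> d_reachable_states M"
  shows "cover_seq M V (initial M) = []"
  unfolding cover_seq_def
  using assms d_reaches_Nil unfolding state_cover_def by (metis (no_types, lifting) the1_equality)

text \<open>Not an equality: \<open>dot {[]} {} = {[]}\<close>.\<close>

lemma dot_Nil_left_subset: "dot {[]} B \<subseteq> insert [] B"
  unfolding dot_def by auto

lemma generated_suite_prefix_antichain:
  "generated_suite M m T \<Longrightarrow> \<forall>t1\<in>T. \<forall>t2\<in>T. prefix t1 t2 \<longrightarrow> t1 = t2"
  unfolding generated_suite_def strict_prefix_def by blast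

lemma generated_suite_subset_Tr:
  assumes "\<forall>S \<in> SD M. \<exists>s. S = {s}" "d_reachable_states M = {initial M}"
    and "generated_suite M m T"
  shows "T \<subseteq> insert [] (Tr M (initial M) m)"
proof -
  obtain V ds Tfin where V: "state_cover M V" and "process_D M m V ds (initial_T M m V) Tfin"
    and "T = {t \<in> Tfin. \<not> (\<exists>t' \<in> Tfin. strict_prefix t t')}"
    using assms(3) unfolding generated_suite_def by blast
  then have "T \<subseteq> initial_T M m V" using process_D_singleton_SD assms(1) by blast
  also have "\<dots> = dot {[]} (Tr M (initial M) m)"
    using cover_seq_initial[OF V] assms(2) unfolding initial_T_def by simp
  also have "\<dots> \<subseteq> insert [] (Tr M (initial M) m)" by (rule dot_Nil_left_subset)
  finally show ?thesis .
qed

theorem mainTheorem4: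
  fixes M :: "('s, 'x, 'y) fsm" and n m :: nat
  assumes "well_formed M"
    and "observable M"
    and "card (states M) = n"
    and "\<forall>s \<in> states M. reachable M s"
    and "d_reachable_states M = {initial M}"
    and "\<forall>s1 \<in> states M. \<forall>s2 \<in> states M. s1 \<noteq> s2 \<longrightarrow> \<not> r_distinguishable M s1 s2"
    and "m \<ge> n"
  shows "(\<forall>io \<in> L M. length io = m * n \<longrightarrow> (\<exists>\<pi>. prefix \<pi> io \<and> term_set M (initial M) \<pi> m \<noteq> {}))
       \<and> Tr M (initial M) m \<subseteq> {xs \<in> lists (inputs M). length xs \<le> m * n}
       \<and> (\<forall>T. generated_suite M m T \<longrightarrow> finite T \<and> card T \<le> card (inputs M) ^ (m * n))"
proof -
  note wf = assms(1) and obs = assms(2) and n = assms(3) and dr = assms(5)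
  have SD: "SD M = (\<lambda>s. {s}) ` states M"
    by (rule SD_eq_singletons) (use wf assms(6) in \<open>auto simp: well_formed_def\<close>)
  have Tr: "Tr M (initial M) m \<subseteq> {xs \<in> lists (inputs M). length xs \<le> m * n}"
    using Tr_subset_bounded_lists[OF wf obs SD dr] n by simp
  have "\<exists>\<pi>. prefix \<pi> io \<and> term_set M (initial M) \<pi> m \<noteq> {}" if io: "io \<in> L M" "length io = m * n" for io
  proof -
    obtain k where "term_set M (initial M) (take k io) m \<noteq> {}"
      using terminated_prefix_exists[OF wf obs SD dr io(1), where m = m] io(2) n by auto
    then show ?thesis using take_is_prefix by blast
  qed
  moreover have "finite T \<and> card T \<le> card (inputs M) ^ (m * n)" if "generated_suite M m T" for T
  proof (rule card_prefix_antichain_le)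
    show "finite (inputs M)" "inputs M \<noteq> {}" using wf unfolding well_formed_def by auto
    have "\<forall>S \<in> SD M. \<exists>s. S = {s}" using SD by blast
    then have "T \<subseteq> insert [] (Tr M (initial M) m)" by (rule generated_suite_subset_Tr[OF _ dr that])
    also have "\<dots> \<subseteq> {xs \<in> lists (inputs M). length xs \<le> m * n}" using Tr by simp
    finally show "T \<subseteq> {xs \<in> lists (inputs M). length xs \<le> m * n}" .
    show "\<forall>t1\<in>T. \<forall>t2\<in>T. prefix t1 t2 \<longrightarrow> t1 = t2"
      using generated_suite_prefix_antichain[OF that] .
  qed
  ultimately show ?thesis using Tr by blast
qed

end
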